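(* Let $p\in[1,\infty)$. If $\lambda,\mu\in\mathcal M^+(\mathbb S^{N-1})$, $\nu\in\mathcal M^+(\mathbb R^N)$ and $\alpha\in[0,\infty)$ are such that $\mathcal G^{\mu,\nu}_p(u)=\mathcal G^{\lambda,\alpha\delta_0}_p(u)$ for every compactly supported Lipschitz function $u$ on $\mathbb R^N$, then $\nu=\beta\delta_0$ for some $\beta\in[0,\infty)$.
   Context: $\mathcal M^+(X)$ denotes finite non-negative Radon measures on $X$; $\delta_0$ is the Dirac mass at $0$. For Lipschitz compactly supported $u$ (more generally $u\in W^{1,p}$, or $BV$ if $p=1$), $\mathcal G^{\mu,\nu}_p(u)=\int_{\mathbb S^{N-1}}\|\sigma\cdot Du\|^p_{L^p}\,d\mu(\sigma)+\int_{\mathbb R^N\setminus\{0\}}\frac{\|u(\cdot+z)-u\|^p_{L^p}}{|z|^p}\,d\nu(z)$, where $\|\sigma\cdot Du\|^p_{L^p}=\int_{\mathbb R^N}|\sigma\cdot\nabla u(x)|^pdx$. *)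

theory Defs
  imports "HOL-Probability.Probability"
begin

text \<open>Directional derivative sigma . grad u(x); the gradient of a Lipschitz function
  exists a.e. (Rademacher); where u is not differentiable we set the value to 0
  (a Lebesgue-null set, irrelevant for the L^p integrals).\<close>
definition dir_grad :: "('a::euclidean_space \<Rightarrow> real) \<Rightarrow> 'a \<Rightarrow> 'a \<Rightarrow> real" where
  "dir_grad u \<sigma> x = (if u differentiable (at x) then frechet_derivative u (at x) \<sigma> else 0)"

definition G_fun :: "real \<Rightarrow> 'a::euclidean_space measure \<Rightarrow> 'a measure \<Rightarrow> ('a \<Rightarrow> real) \<Rightarrow> ennreal" where
  "G_fun p \<mu> \<nu> u =
     (\<integral>\<^sup>+ \<sigma>. (\<integral>\<^sup>+ x. ennreal (\<bar>dir_grad u \<sigma> x\<bar> powr p) \<partial>lborel) \<partial>\<mu>)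
   + (\<integral>\<^sup>+ z \<in> UNIV - {0}. (\<integral>\<^sup>+ x. ennreal (\<bar>u (x + z) - u x\<bar> powr p) \<partial>lborel)
                              / ennreal (norm z powr p) \<partial>\<nu>)"

definition dirac0 :: "'a::euclidean_space measure" where
  "dirac0 = return borel 0"

end

theory Submission
  imports Defs
begin

text \<open>
  Test the identity on the tents \<open>u\<^sub>R x = max 0 (1 - |x|/R)\<close>. By scaling, the gradient part
  of \<open>G(u\<^sub>R)\<close> is \<open>R^(N-p) \<integral>K d\<mu>\<close>, where \<open>K \<sigma>\<close> is the \<open>p\<close>-th power of the \<open>L\<^sup>p\<close> norm of
  \<open>\<sigma>\<cdot>\<nabla>u\<^sub>1\<close>, and the difference part is \<open>R^N \<integral>\<^bsub>z\<noteq>0\<^esub> D(z/R)/|z|^p d\<nu>\<close>, where \<open>D w\<close> is the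
  \<open>p\<close>-th power of the \<open>L\<^sup>p\<close> norm of \<open>u\<^sub>1(\<cdot> + w) - u\<^sub>1\<close>; for \<open>\<alpha>\<delta>\<^sub>0\<close> the difference part vanishes
  because the origin is excluded. Since \<open>D w \<le> 2|B\<^sub>1| min(1,|w|)^p\<close>, dividing the identity by
  \<open>R^(N-p)\<close> and letting \<open>R \<rightarrow> 0\<close> (dominated convergence, \<open>\<nu>\<close> finite) gives
  \<open>\<integral>K d\<lambda> \<le> \<integral>K d\<mu>\<close>. At \<open>R = 1\<close> the identity then forces \<open>\<integral>\<^bsub>z\<noteq>0\<^esub> D z/|z|^p d\<nu> = 0\<close>, and as
  \<open>D > 0\<close> off the origin, \<open>\<nu>\<close> is concentrated at \<open>0\<close>.
\<close>

lemma ball_in_borel [measurable]: "ball c r \<in> sets borel"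
  by simp

lemma borel_measurable_sets_restrict_space:
  assumes "sets M = sets (restrict_space borel S)" "f \<in> borel_measurable borel"
  shows "f \<in> borel_measurable M"
  by (subst measurable_cong_sets[OF assms(1) refl]) (rule measurable_restrict_space1[OF assms(2)])

lemma nn_integral_lborel_scaleR_inverse:
  fixes h :: "'a::euclidean_space \<Rightarrow> ennreal"
  assumes [measurable]: "h \<in> borel_measurable borel" and "0 < R"
  shows "(\<integral>\<^sup>+x. h (x /\<^sub>R R) \<partial>lborel) = ennreal (R ^ DIM('a)) * (\<integral>\<^sup>+x. h x \<partial>lborel)"
  using \<open>0 < R\<close>
  by (subst lborel_affine[of R 0]) (simp_all add: nn_integral_density nn_integral_distr nn_integral_cmult)

lemma AE_lborel_neq_0_and_norm_neq:
  "AE x in lborel. x \<noteq> (0::'a::euclidean_space) \<and> norm x \<noteq> R"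
proof -
  have "sphere (0::'a) R \<in> null_sets lborel"
    using negligible_sphere[of "0::'a" R]
    by (auto simp: null_sets_completion_iff negligible_iff_null_sets negligible_convex_frontier)
  then have "AE x in lborel. x \<notin> sphere (0::'a) R" by (rule AE_not_in)
  then show ?thesis using AE_lborel_singleton[of "0::'a"] by eventually_elim auto
qed

lemma tendsto_nn_integral_min_powr:
  fixes \<nu> :: "'a::real_normed_vector measure"
  assumes "sets \<nu> = sets borel" "finite_measure \<nu>" "0 < p" "0 \<le> c"
    and "\<And>n. 0 \<le> r n" "r \<longlonglongrightarrow> 0"
  shows "(\<lambda>n. \<integral>\<^sup>+z. ennreal (c * min 1 (r n / norm z) powr p) \<partial>\<nu>) \<longlonglongrightarrow> 0"
proof -
  have [measurable_cong]: "sets \<nu> = sets borel" by (rule assms(1))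
  have "(\<lambda>n. \<integral>\<^sup>+z. ennreal (c * min 1 (r n / norm z) powr p) \<partial>\<nu>) \<longlonglongrightarrow> (\<integral>\<^sup>+z. 0 \<partial>\<nu>)"
  proof (rule nn_integral_dominated_convergence[where w = "\<lambda>_. ennreal c"])
    show "AE z in \<nu>. ennreal (c * min 1 (r n / norm z) powr p) \<le> ennreal c" for n
      using assms(3-5) by (intro AE_I2 ennreal_leI mult_left_le powr_le1) auto
    show "(\<integral>\<^sup>+z. ennreal c \<partial>\<nu>) < \<infinity>"
      using finite_measure.emeasure_finite[OF assms(2), of "space \<nu>"]
      by (simp add: ennreal_mult_less_top top.not_eq_extremum)
    have "(\<lambda>n. ennreal (c * min 1 (r n / norm z) powr p)) \<longlonglongrightarrow> ennreal (c * 0)" for z :: 'a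
    proof (intro tendsto_ennrealI tendsto_mult tendsto_const tendsto_zero_powrI)
      show "(\<lambda>n. min 1 (r n / norm z)) \<longlonglongrightarrow> 0"
        using tendsto_min[OF tendsto_const[of 1] tendsto_divide_zero[OF assms(6), of "norm z"]] by simp
    qed (use assms in auto)
    then show "AE z in \<nu>. (\<lambda>n. ennreal (c * min 1 (r n / norm z) powr p)) \<longlonglongrightarrow> 0"
      by simp
  qed measurable
  then show ?thesis by simp
qed

lemma finite_measure_eq_scale_return:
  fixes \<nu> :: "'a::t1_space measure"
  assumes "sets \<nu> = sets borel" "finite_measure \<nu>" "emeasure \<nu> (UNIV - {a}) = 0"
  shows "\<nu> = scale_measure (ennreal (measure \<nu> {a})) (return borel a)"
proof (rule measure_eqI)
  fix A assume "A \<in> sets \<nu>"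
  have "UNIV - {a} \<in> null_sets \<nu>"
    unfolding null_sets_def using assms(1,3) by (simp add: borel_open open_delete)
  then have "emeasure \<nu> A = emeasure \<nu> (A - (UNIV - {a}))"
    using \<open>A \<in> sets \<nu>\<close> by (simp add: emeasure_Diff_null_set)
  also have "A - (UNIV - {a}) = A \<inter> {a}" by auto
  also have "emeasure \<nu> (A \<inter> {a}) = ennreal (measure \<nu> {a}) * indicator A a"
    using assms(1) by (cases "a \<in> A") (simp_all add: finite_measure.emeasure_eq_measure[OF assms(2)])
  finally show "emeasure \<nu> A = emeasure (scale_measure (ennreal (measure \<nu> {a})) (return borel a)) A"
    using \<open>A \<in> sets \<nu>\<close> assms(1) by simp
qed (use assms(1) in simp)

lemma powr_of_nat_minus: "0 < R \<Longrightarrow> R powr (real n - p) = R powr (-p) * R ^ n"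
  by (simp add: powr_diff powr_realpow powr_minus_divide)

lemma min_1_div_norm_powr:
  fixes z :: "'a::real_normed_vector"
  assumes "0 < R" "z \<noteq> 0"
  shows "min 1 (norm z / R) powr p / norm z powr p = R powr (-p) * min 1 (R / norm z) powr p"
proof -
  have "min 1 (norm z / R) / norm z = min 1 (R / norm z) / R"
    using assms by (cases "norm z \<le> R") (auto simp: min_def field_simps)
  then have "(min 1 (norm z / R) / norm z) powr p = (min 1 (R / norm z) / R) powr p"
    by simp
  then show ?thesis
    using assms by (simp add: powr_divide powr_minus_divide)
qed

lemma dir_grad_eqI: "(u has_derivative D) (at x) \<Longrightarrow> dir_grad u \<sigma> x = D \<sigma>"
  unfolding dir_grad_def by (metis differentiableI frechet_derivative_at)

definition local_part :: "real \<Rightarrow> 'a::euclidean_space measure \<Rightarrow> ('a \<Rightarrow> real) \<Rightarrow> ennreal" where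
  "local_part p \<mu> u = (\<integral>\<^sup>+ \<sigma>. (\<integral>\<^sup>+ x. ennreal (\<bar>dir_grad u \<sigma> x\<bar> powr p) \<partial>lborel) \<partial>\<mu>)"

definition nonlocal_part :: "real \<Rightarrow> 'a::euclidean_space measure \<Rightarrow> ('a \<Rightarrow> real) \<Rightarrow> ennreal" where
  "nonlocal_part p \<nu> u =
     (\<integral>\<^sup>+ z \<in> UNIV - {0}. (\<integral>\<^sup>+ x. ennreal (\<bar>u (x + z) - u x\<bar> powr p) \<partial>lborel)
                            / ennreal (norm z powr p) \<partial>\<nu>)"

lemma G_fun_eq_local_part_plus_nonlocal_part:
  "G_fun p \<mu> \<nu> u = local_part p \<mu> u + nonlocal_part p \<nu> u"
  unfolding G_fun_def local_part_def nonlocal_part_def ..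

lemma nonlocal_part_scale_dirac0: "nonlocal_part p (scale_measure c dirac0) u = 0"
proof -
  have "UNIV - {0} \<in> sets (borel :: 'a measure)"
    by (simp add: borel_open open_delete)
  then have "UNIV - {0} \<in> null_sets (scale_measure c (dirac0 :: 'a measure))"
    by (simp add: null_sets_def dirac0_def emeasure_return)
  then have "AE z in scale_measure c dirac0. z = (0::'a)"
    by (rule AE_not_in[THEN eventually_mono]) simp
  then show ?thesis
    unfolding nonlocal_part_def by (subst nn_integral_cong_AE[where v = "\<lambda>_. 0"]) auto
qed

definition tent :: "real \<Rightarrow> 'a::euclidean_space \<Rightarrow> real" where
  "tent R x = max 0 (1 - norm x / R)"

lemma borel_measurable_tent [measurable]: "tent R \<in> borel_measurable borel"
  unfolding tent_def by measurable

lemma tent_scale: "0 < R \<Longrightarrow> tent R x = tent 1 (x /\<^sub>R R)"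
  by (simp add: tent_def field_simps)

lemma tent_1_bounds: "0 \<le> tent 1 x" "tent 1 x \<le> 1"
  by (auto simp: tent_def)

lemma tent_1_eq_0: "1 \<le> norm x \<Longrightarrow> tent 1 x = 0"
  by (simp add: tent_def)

lemma tent_1_diff_le: "\<bar>tent 1 a - tent 1 b\<bar> \<le> norm (a - b)"
proof -
  have "\<bar>tent 1 a - tent 1 b\<bar> \<le> \<bar>norm a - norm b\<bar>" unfolding tent_def by linarith
  also have "\<dots> \<le> norm (a - b)" by (rule norm_triangle_ineq3)
  finally show ?thesis .
qed

lemma lipschitz_on_tent: "0 < R \<Longrightarrow> (1/R)-lipschitz_on UNIV (tent R)"
proof (rule lipschitz_onI)
  fix x y :: 'a
  assume "0 < R"
  have "dist (tent R x) (tent R y) \<le> norm (x /\<^sub>R R - y /\<^sub>R R)"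
    using tent_1_diff_le[of "x /\<^sub>R R" "y /\<^sub>R R"]
    by (simp only: tent_scale[OF \<open>0 < R\<close>, of x] tent_scale[OF \<open>0 < R\<close>, of y] dist_real_def)
  also have "\<dots> = (1/R) * dist x y"
    using \<open>0 < R\<close> by (simp add: dist_norm divide_inverse_commute flip: scaleR_diff_right)
  finally show "dist (tent R x) (tent R y) \<le> (1/R) * dist x y" .
qed simp

lemma compact_support_tent: "0 < R \<Longrightarrow> compact (closure {x::'a::euclidean_space. tent R x \<noteq> 0})"
proof -
  assume "0 < R"
  then have "{x::'a. tent R x \<noteq> 0} \<subseteq> cball 0 R"
    by (auto simp: tent_def max_def field_simps split: if_splits)
  then show ?thesis by (meson bounded_cball bounded_subset compact_closure)
qed

definition tent_dir_grad :: "'a::euclidean_space \<Rightarrow> 'a \<Rightarrow> real" where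
  "tent_dir_grad \<sigma> x = (if 0 < norm x \<and> norm x < 1 then - inner x \<sigma> / norm x else 0)"

lemma borel_measurable_tent_dir_grad [measurable]: "tent_dir_grad \<sigma> \<in> borel_measurable borel"
  unfolding tent_dir_grad_def by measurable

lemma dir_grad_tent:
  fixes x :: "'a::euclidean_space"
  assumes "0 < R" "x \<noteq> 0" "norm x \<noteq> R"
  shows "dir_grad (tent R) \<sigma> x = tent_dir_grad \<sigma> (x /\<^sub>R R) / R"
proof (cases "norm x < R")
  case True
  have "((\<lambda>y. 1 - norm y / R) has_derivative (\<lambda>h. 0 - inner h (sgn x) / R)) (at x)"
    using has_derivative_norm[OF \<open>x \<noteq> 0\<close>] assms(1) by (intro derivative_eq_intros) auto
  then have "(tent R has_derivative (\<lambda>h. 0 - inner h (sgn x) / R)) (at x)"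
    by (rule has_derivative_transform_within_open[where s = "ball 0 R"])
       (use True assms in \<open>auto simp: tent_def max_def field_simps\<close>)
  then show ?thesis
    using True assms by (simp add: dir_grad_eqI tent_dir_grad_def sgn_div_norm inner_commute field_simps)
next
  case False
  then have "(tent R has_derivative (\<lambda>h. 0)) (at x)"
    by (intro has_derivative_transform_within_open[where s = "- cball 0 R", OF has_derivative_const])
       (use assms in \<open>auto simp: tent_def\<close>)
  then show ?thesis
    using False assms by (simp add: dir_grad_eqI tent_dir_grad_def field_simps)
qed

definition tent_grad_energy :: "real \<Rightarrow> 'a::euclidean_space \<Rightarrow> ennreal" where
  "tent_grad_energy p \<sigma> = (\<integral>\<^sup>+x. ennreal (\<bar>tent_dir_grad \<sigma> x\<bar> powr p) \<partial>lborel)"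

lemma borel_measurable_tent_grad_energy [measurable]: "tent_grad_energy p \<in> borel_measurable borel"
  unfolding tent_grad_energy_def tent_dir_grad_def by measurable

lemma nn_integral_dir_grad_tent:
  fixes \<sigma> :: "'a::euclidean_space"
  assumes "0 < R"
  shows "(\<integral>\<^sup>+x. ennreal (\<bar>dir_grad (tent R) \<sigma> x\<bar> powr p) \<partial>lborel)
       = ennreal (R powr (real DIM('a) - p)) * tent_grad_energy p \<sigma>"
proof -
  have "(\<integral>\<^sup>+x. ennreal (\<bar>dir_grad (tent R) \<sigma> x\<bar> powr p) \<partial>lborel)
      = (\<integral>\<^sup>+x. ennreal (R powr (-p)) * ennreal (\<bar>tent_dir_grad \<sigma> (x /\<^sub>R R)\<bar> powr p) \<partial>lborel)"
    using AE_lborel_neq_0_and_norm_neq[of R]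
    by (intro nn_integral_cong_AE, eventually_elim)
       (use assms in \<open>simp add: dir_grad_tent ennreal_mult'[symmetric] abs_divide powr_divide powr_minus_divide\<close>)
  also have "\<dots> = ennreal (R powr (-p)) * (ennreal (R ^ DIM('a)) * tent_grad_energy p \<sigma>)"
    unfolding tent_grad_energy_def using assms
    by (subst nn_integral_lborel_scaleR_inverse[symmetric]) (simp_all add: nn_integral_cmult)
  also have "\<dots> = ennreal (R powr (real DIM('a) - p)) * tent_grad_energy p \<sigma>"
    using powr_of_nat_minus[OF assms] by (simp add: ennreal_mult' mult.assoc)
  finally show ?thesis .
qed

lemma local_part_tent:
  fixes \<mu> :: "'a::euclidean_space measure"
  assumes "tent_grad_energy p \<in> borel_measurable \<mu>" "0 < R"
  shows "local_part p \<mu> (tent R) = ennreal (R powr (real DIM('a) - p)) * (\<integral>\<^sup>+\<sigma>. tent_grad_energy p \<sigma> \<partial>\<mu>)"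
  using assms by (simp add: local_part_def nn_integral_dir_grad_tent nn_integral_cmult)

lemma tent_grad_energy_le:
  fixes \<sigma> :: "'a::euclidean_space"
  assumes "norm \<sigma> = 1" "0 \<le> p"
  shows "tent_grad_energy p \<sigma> \<le> emeasure lborel (ball (0::'a) 1)"
proof -
  have "ennreal (\<bar>tent_dir_grad \<sigma> y\<bar> powr p) \<le> indicator (ball 0 1) y" for y :: 'a
  proof (cases "0 < norm y \<and> norm y < 1")
    case True
    have "\<bar>inner y \<sigma>\<bar> \<le> norm y" using Cauchy_Schwarz_ineq2[of y \<sigma>] assms by simp
    then have "\<bar>tent_dir_grad \<sigma> y\<bar> powr p \<le> 1"
      using True assms by (intro powr_le1) (auto simp: tent_dir_grad_def abs_divide divide_le_eq_1)
    then show ?thesis using True by simp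
  qed (auto simp: tent_dir_grad_def)
  then have "tent_grad_energy p \<sigma> \<le> (\<integral>\<^sup>+y. indicator (ball (0::'a) 1) y \<partial>lborel)"
    unfolding tent_grad_energy_def by (intro nn_integral_mono)
  then show ?thesis by simp
qed

lemma nn_integral_tent_grad_energy_finite:
  fixes \<mu> :: "'a::euclidean_space measure"
  assumes "sets \<mu> = sets (restrict_space borel (sphere 0 1))" "finite_measure \<mu>" "0 \<le> p"
  shows "(\<integral>\<^sup>+\<sigma>. tent_grad_energy p \<sigma> \<partial>\<mu>) < \<infinity>"
proof -
  have "space \<mu> = sphere 0 1"
    using sets_eq_imp_space_eq[OF assms(1)] by (simp add: space_restrict_space)
  then have "(\<integral>\<^sup>+\<sigma>. tent_grad_energy p \<sigma> \<partial>\<mu>) \<le> (\<integral>\<^sup>+\<sigma>. emeasure lborel (ball (0::'a) 1) \<partial>\<mu>)"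
    using tent_grad_energy_le assms(3) by (intro nn_integral_mono) auto
  also have "\<dots> < \<infinity>"
    using emeasure_lborel_ball_finite[of "0::'a" 1] finite_measure.emeasure_finite[OF assms(2), of "space \<mu>"]
    by (simp add: ennreal_mult_less_top top.not_eq_extremum)
  finally show ?thesis .
qed

definition tent_diff_energy :: "real \<Rightarrow> 'a::euclidean_space \<Rightarrow> ennreal" where
  "tent_diff_energy p w = (\<integral>\<^sup>+x. ennreal (\<bar>tent 1 (x + w) - tent 1 x\<bar> powr p) \<partial>lborel)"

lemma borel_measurable_tent_diff_energy [measurable]: "tent_diff_energy p \<in> borel_measurable borel"
  unfolding tent_diff_energy_def by measurable

lemma nn_integral_tent_diff:
  fixes z :: "'a::euclidean_space"
  assumes "0 < R"
  shows "(\<integral>\<^sup>+x. ennreal (\<bar>tent R (x + z) - tent R x\<bar> powr p) \<partial>lborel)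
       = ennreal (R ^ DIM('a)) * tent_diff_energy p (z /\<^sub>R R)"
  using nn_integral_lborel_scaleR_inverse[OF _ assms,
      of "\<lambda>y. ennreal (\<bar>tent 1 (y + z /\<^sub>R R) - tent 1 y\<bar> powr p)"]
  using assms by (simp add: tent_scale[OF assms] scaleR_add_right tent_diff_energy_def)

lemma tent_diff_energy_le:
  fixes w :: "'a::euclidean_space"
  assumes "0 \<le> p"
  shows "tent_diff_energy p w \<le> ennreal (2 * unit_ball_vol DIM('a) * min 1 (norm w) powr p)"
proof -
  let ?m = "min 1 (norm w) powr p"
  have "ennreal (\<bar>tent 1 (x + w) - tent 1 x\<bar> powr p)
     \<le> ennreal ?m * (indicator (ball 0 1) x + indicator (ball (-w) 1) x)" for x
  proof (cases "x \<in> ball 0 1 \<or> x \<in> ball (-w) 1")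
    case True
    have "\<bar>tent 1 (x + w) - tent 1 x\<bar> \<le> min 1 (norm w)"
      using tent_1_bounds[of "x + w"] tent_1_bounds[of x] tent_1_diff_le[of "x + w" x] by simp
    then have "ennreal (\<bar>tent 1 (x + w) - tent 1 x\<bar> powr p) \<le> ennreal ?m"
      using assms by (intro ennreal_leI powr_mono2) auto
    also have "\<dots> \<le> ennreal ?m * (indicator (ball 0 1) x + indicator (ball (-w) 1) x)"
      using True mult_left_mono[of 1 2 "ennreal ?m"] by (auto simp: indicator_def)
    finally show ?thesis .
  next
    case False
    then show ?thesis
      using assms by (simp add: tent_1_eq_0 dist_norm norm_minus_commute add.commute)
  qed
  then have "tent_diff_energy p w
      \<le> (\<integral>\<^sup>+x. ennreal ?m * (indicator (ball 0 1) x + indicator (ball (-w) 1) x) \<partial>lborel)"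
    unfolding tent_diff_energy_def by (rule nn_integral_mono)
  also have "\<dots> = ennreal ?m * (\<integral>\<^sup>+x. indicator (ball 0 1) x + indicator (ball (-w) 1) x \<partial>lborel)"
    by (rule nn_integral_cmult) measurable
  also have "\<dots> = ennreal ?m * (emeasure lborel (ball (0::'a) 1) + emeasure lborel (ball (-w) 1))"
    by (simp add: nn_integral_add)
  also have "\<dots> = ennreal ?m * (2 * ennreal (unit_ball_vol DIM('a)))"
    by (simp add: emeasure_ball flip: mult_2)
  also have "\<dots> = ennreal (2 * unit_ball_vol DIM('a) * ?m)"
    by (simp add: ennreal_mult' mult_ac)
  finally show ?thesis .
qed

lemma tent_diff_energy_pos:
  fixes w :: "'a::euclidean_space"
  assumes "w \<noteq> 0" "0 < p"
  shows "0 < tent_diff_energy p w"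
proof -
  define d where "d x = \<bar>tent 1 (x + w) - tent 1 x\<bar>" for x :: 'a
  have "0 < d 0" using assms by (auto simp: d_def tent_def)
  moreover have "continuous (at 0) d" unfolding d_def tent_def
    by (intro continuous_intros) auto
  ultimately obtain r where "0 < r" and r: "\<And>x. dist x 0 < r \<Longrightarrow> dist (d x) (d 0) < d 0 / 2"
    unfolding continuous_at_eps_delta by (metis half_gt_zero)
  have bump: "ennreal ((d 0 / 2) powr p) * indicator (ball 0 r) x \<le> ennreal (d x powr p)" for x
  proof (cases "x \<in> ball 0 r")
    case True
    then have "\<bar>d x - d 0\<bar> < d 0 / 2" using r[of x] by (simp add: dist_norm dist_real_def)
    then have "d 0 / 2 \<le> d x" by arith
    then show ?thesis using True \<open>0 < d 0\<close> assms by (auto intro: powr_mono2)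
  qed simp
  have "(\<integral>\<^sup>+x. ennreal ((d 0 / 2) powr p) * indicator (ball (0::'a) r) x \<partial>lborel) \<le> tent_diff_energy p w"
    unfolding tent_diff_energy_def d_def[symmetric] by (rule nn_integral_mono) (rule bump)
  moreover have "0 < (\<integral>\<^sup>+x. ennreal ((d 0 / 2) powr p) * indicator (ball (0::'a) r) x \<partial>lborel)"
    using \<open>0 < d 0\<close> \<open>0 < r\<close> by (simp add: nn_integral_cmult emeasure_ball ennreal_mult'[symmetric])
  ultimately show ?thesis by order
qed

lemma tent_diff_energy_scaled_le:
  fixes z :: "'a::euclidean_space"
  assumes "0 < R" "0 \<le> p" "z \<noteq> 0"
  shows "ennreal (R ^ DIM('a)) * tent_diff_energy p (z /\<^sub>R R) / ennreal (norm z powr p)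
     \<le> ennreal (R powr (real DIM('a) - p)) * ennreal (2 * unit_ball_vol DIM('a) * min 1 (R / norm z) powr p)"
proof -
  let ?V = "2 * unit_ball_vol DIM('a)"
  have "norm (z /\<^sub>R R) = norm z / R" using assms(1) by (simp add: divide_inverse_commute)
  then have "ennreal (R ^ DIM('a)) * tent_diff_energy p (z /\<^sub>R R)
      \<le> ennreal (R ^ DIM('a) * (?V * min 1 (norm z / R) powr p))"
    using tent_diff_energy_le[OF assms(2), of "z /\<^sub>R R"] assms(1)
    by (simp add: ennreal_mult' mult_left_mono)
  then have "ennreal (R ^ DIM('a)) * tent_diff_energy p (z /\<^sub>R R) / ennreal (norm z powr p)
      \<le> ennreal (R ^ DIM('a) * (?V * min 1 (norm z / R) powr p) / norm z powr p)"
    using assms by (simp add: divide_right_mono_ennreal flip: divide_ennreal)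
  also have "R ^ DIM('a) * (?V * min 1 (norm z / R) powr p) / norm z powr p
      = R powr (real DIM('a) - p) * (?V * min 1 (R / norm z) powr p)"
  proof -
    have "R ^ DIM('a) * (?V * min 1 (norm z / R) powr p) / norm z powr p
        = R ^ DIM('a) * ?V * (min 1 (norm z / R) powr p / norm z powr p)"
      by simp
    also have "\<dots> = R ^ DIM('a) * ?V * (R powr (-p) * min 1 (R / norm z) powr p)"
      by (simp only: min_1_div_norm_powr[OF assms(1,3)])
    also have "\<dots> = R powr (real DIM('a) - p) * (?V * min 1 (R / norm z) powr p)"
      using assms(1) by (simp add: powr_of_nat_minus ac_simps)
    finally show ?thesis .
  qed
  finally show ?thesis by (simp add: ennreal_mult')
qed

lemma nonlocal_part_tent_le:
  fixes \<nu> :: "'a::euclidean_space measure"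
  assumes "sets \<nu> = sets borel" "0 < R" "0 \<le> p"
  shows "nonlocal_part p \<nu> (tent R)
     \<le> ennreal (R powr (real DIM('a) - p))
         * (\<integral>\<^sup>+z. ennreal (2 * unit_ball_vol DIM('a) * min 1 (R / norm z) powr p) \<partial>\<nu>)"
proof -
  have [measurable_cong]: "sets \<nu> = sets borel" by (rule assms(1))
  have "nonlocal_part p \<nu> (tent R) \<le> (\<integral>\<^sup>+z. ennreal (R powr (real DIM('a) - p))
         * ennreal (2 * unit_ball_vol DIM('a) * min 1 (R / norm z) powr p) \<partial>\<nu>)"
    unfolding nonlocal_part_def nn_integral_tent_diff[OF assms(2)]
    by (intro nn_integral_mono) (auto simp: tent_diff_energy_scaled_le assms split: split_indicator)
  also have "\<dots> = ennreal (R powr (real DIM('a) - p))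
         * (\<integral>\<^sup>+z. ennreal (2 * unit_ball_vol DIM('a) * min 1 (R / norm z) powr p) \<partial>\<nu>)"
    by (rule nn_integral_cmult) measurable
  finally show ?thesis .
qed

lemma emeasure_punctured_eq_0_if_nonlocal_part_tent_eq_0:
  fixes \<nu> :: "'a::euclidean_space measure"
  assumes "sets \<nu> = sets borel" "0 < p" "nonlocal_part p \<nu> (tent 1) = 0"
  shows "emeasure \<nu> (UNIV - {0}) = 0"
proof -
  have [measurable_cong]: "sets \<nu> = sets borel" by (rule assms(1))
  have "AE z in \<nu>. tent_diff_energy p z / ennreal (norm z powr p) * indicator (UNIV - {0}) z = 0"
    using assms(3) by (subst nn_integral_0_iff_AE[symmetric]) (simp_all add: nonlocal_part_def nn_integral_tent_diff)
  moreover have "z = 0" if "tent_diff_energy p z = 0" for z :: 'a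
    using tent_diff_energy_pos[of z p] assms(2) that by (cases "z = 0") auto
  ultimately have "AE z in \<nu>. z = 0"
    by (auto elim!: AE_mp simp: indicator_eq_0_iff)
  moreover have "UNIV - {0} \<in> sets \<nu>" "space \<nu> = UNIV"
    using assms(1) sets_eq_imp_space_eq[OF assms(1)] by (simp_all add: borel_open open_delete)
  ultimately show ?thesis by (subst (asm) AE_iff_measurable) auto
qed

theorem lemma2p13:
  fixes p :: real and \<alpha> :: real
    and lam \<mu> \<nu> :: "'a::euclidean_space measure"
  assumes "1 \<le> p"
    and "sets lam = sets (restrict_space borel (sphere (0::'a) 1))" and "finite_measure lam"
    and "sets \<mu> = sets (restrict_space borel (sphere (0::'a) 1))" and "finite_measure \<mu>"
    and "sets \<nu> = sets (borel :: 'a measure)" and "finite_measure \<nu>"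
    and "0 \<le> \<alpha>"
    and "\<And>u :: 'a \<Rightarrow> real. (\<exists>L. L-lipschitz_on UNIV u) \<Longrightarrow> compact (closure {x. u x \<noteq> 0}) \<Longrightarrow>
           G_fun p \<mu> \<nu> u = G_fun p lam (scale_measure (ennreal \<alpha>) dirac0) u"
  shows "\<exists>\<beta>::real. 0 \<le> \<beta> \<and> \<nu> = scale_measure (ennreal \<beta>) dirac0"
proof -
  have "0 < p" using assms(1) by simp
  define c where "c R = ennreal (R powr (real DIM('a) - p))" for R
  define E where "E M = (\<integral>\<^sup>+\<sigma>. tent_grad_energy p \<sigma> \<partial>M)" for M :: "'a measure"
  define H where "H R = (\<integral>\<^sup>+z. ennreal (2 * unit_ball_vol DIM('a) * min 1 (R / norm z) powr p) \<partial>\<nu>)" for R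
  have balance: "c R * E \<mu> + nonlocal_part p \<nu> (tent R) = c R * E lam" if "0 < R" for R
    using assms(9)[OF _ compact_support_tent] lipschitz_on_tent that
      borel_measurable_sets_restrict_space[OF assms(2) borel_measurable_tent_grad_energy]
      borel_measurable_sets_restrict_space[OF assms(4) borel_measurable_tent_grad_energy]
    by (auto simp: G_fun_eq_local_part_plus_nonlocal_part local_part_tent nonlocal_part_scale_dirac0 c_def E_def)
  have "E lam \<le> E \<mu> + H R" if "0 < R" for R
  proof -
    have "c R * E lam \<le> c R * (E \<mu> + H R)"
      unfolding balance[OF that, symmetric] distrib_left
      using nonlocal_part_tent_le[OF assms(6) that] \<open>0 < p\<close> by (simp add: c_def H_def)
    then show ?thesis using that by (simp add: c_def ennreal_mult_le_mult_iff)
  qed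
  moreover have "(\<lambda>n. E \<mu> + H (inverse (Suc n))) \<longlonglongrightarrow> E \<mu> + 0"
    unfolding H_def using assms(6,7) \<open>0 < p\<close>
    by (intro tendsto_add tendsto_const tendsto_nn_integral_min_powr LIMSEQ_inverse_real_of_nat) auto
  ultimately have "E lam \<le> E \<mu>"
    by (intro LIMSEQ_le_const[where X = "\<lambda>n. E \<mu> + H (inverse (Suc n))"]) auto
  moreover have "E \<mu> + nonlocal_part p \<nu> (tent 1) = E lam"
    using balance[of 1] by (simp add: c_def)
  ultimately have "E \<mu> + nonlocal_part p \<nu> (tent 1) \<le> E \<mu> + 0"
    by simp
  moreover have "E \<mu> \<noteq> \<infinity>"
    unfolding E_def using nn_integral_tent_grad_energy_finite[OF assms(4,5), of p] \<open>0 < p\<close>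
    by (simp add: top.not_eq_extremum)
  ultimately have "nonlocal_part p \<nu> (tent 1) = 0"
    by (simp add: ennreal_add_left_cancel_le)
  then have "emeasure \<nu> (UNIV - {0}) = 0"
    by (rule emeasure_punctured_eq_0_if_nonlocal_part_tent_eq_0[OF assms(6) \<open>0 < p\<close>])
  then have "\<nu> = scale_measure (ennreal (measure \<nu> {0})) dirac0"
    unfolding dirac0_def by (rule finite_measure_eq_scale_return[OF assms(6,7)])
  then show ?thesis using measure_nonneg by blast
qed

end
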